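(* Let $(X,\oplus,\lceil,0)$ be a finite MV-algebra. Then for all $x,y\in X$ the Fibonacci sequence attached to $x,y$, namely $u_0=x$, $u_1=y$, $u_{n+2}=u_n\oplus u_{n+1}$ ($n\in\mathbb{N}$), is stationary: there exists $k\in\mathbb{N}$ such that $u_n=u_k$ for all $n\geq k$.
   Context: An MV-algebra $(X,\oplus,\lceil,0)$ is an abelian monoid $(X,\oplus,0)$ with a unary operation $\lceil$ such that for all $x,y\in X$: $x\oplus\lceil 0=\lceil 0$; $\lceil(\lceil x)=x$; $\lceil(\lceil x\oplus y)\oplus y=\lceil(\lceil y\oplus x)\oplus x$. *)

theory Defs
  imports Main
begin

definition mv_algebra :: "'a set \<Rightarrow> ('a \<Rightarrow> 'a \<Rightarrow> 'a) \<Rightarrow> ('a \<Rightarrow> 'a) \<Rightarrow> 'a \<Rightarrow> bool" where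
  "mv_algebra X oplus neg z \<longleftrightarrow>
     z \<in> X \<and>
     (\<forall>x\<in>X. \<forall>y\<in>X. oplus x y \<in> X) \<and>
     (\<forall>x\<in>X. neg x \<in> X) \<and>
     (\<forall>x\<in>X. \<forall>y\<in>X. \<forall>w\<in>X. oplus (oplus x y) w = oplus x (oplus y w)) \<and>
     (\<forall>x\<in>X. \<forall>y\<in>X. oplus x y = oplus y x) \<and>
     (\<forall>x\<in>X. oplus x z = x) \<and>
     (\<forall>x\<in>X. oplus x (neg z) = neg z) \<and>
     (\<forall>x\<in>X. neg (neg x) = x) \<and>
     (\<forall>x\<in>X. \<forall>y\<in>X. oplus (neg (oplus (neg x) y)) y = oplus (neg (oplus (neg y) x)) x)"

fun fib_seq :: "('a \<Rightarrow> 'a \<Rightarrow> 'a) \<Rightarrow> 'a \<Rightarrow> 'a \<Rightarrow> nat \<Rightarrow> 'a" where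
  "fib_seq oplus x y 0 = x"
| "fib_seq oplus x y (Suc 0) = y"
| "fib_seq oplus x y (Suc (Suc n)) = oplus (fib_seq oplus x y n) (fib_seq oplus x y (Suc n))"

end

theory Submission
  imports Defs "HOL-Library.Infinite_Set"
begin

text \<open>Since u (n+2) = u (n+1) \<oplus> u n, the shifted sequence u 1, u 2, ... is increasing
  for the natural order of the MV-algebra, a \<le> b iff b = a \<oplus> c for some c. This is a partial
  order (antisymmetry comes from the Lukasiewicz axiom, as a \<le> b forces \<not>a \<oplus> b = 1), and an
  increasing sequence with finitely many values is eventually constant: a value attained
  infinitely often squeezes every later term.\<close>

lemma chain_finite_range_eventually_const:
  fixes f :: "nat \<Rightarrow> 'a"
  assumes refl: "reflp_on (range f) R" and trans: "transp_on (range f) R"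
    and antisym: "antisymp_on (range f) R"
    and step: "\<And>n. R (f n) (f (Suc n))" and fin: "finite (range f)"
  shows "\<exists>k. \<forall>n\<ge>k. f n = f k"
proof -
  have chain: "R (f m) (f n)" if "m \<le> n" for m n
    using that
    by (rule transitive_stepwise_le[where R = "\<lambda>m n. R (f m) (f n)"])
      (use refl trans step in \<open>auto dest: reflp_onD transp_onD\<close>)
  obtain a where "infinite (f -` {a})"
    using inf_img_fin_dom[OF fin infinite_UNIV_nat] by blast
  then have recurrent: "\<exists>m\<ge>n. f m = a" for n
    by (auto simp: infinite_nat_iff_unbounded_le)
  then obtain k where k: "f k = a" by blast
  have "f n = f k" if "n \<ge> k" for n
  proof -
    obtain m where "m \<ge> n" "f m = a" using recurrent by blast
    then have "R (f n) (f k)" using chain k by metis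
    then show ?thesis using chain[OF \<open>n \<ge> k\<close>] antisym by (auto dest: antisymp_onD)
  qed
  then show ?thesis by blast
qed

definition mv_le :: "'a set \<Rightarrow> ('a \<Rightarrow> 'a \<Rightarrow> 'a) \<Rightarrow> 'a \<Rightarrow> 'a \<Rightarrow> bool" where
  "mv_le X oplus a b \<longleftrightarrow> (\<exists>c\<in>X. b = oplus a c)"

context
  fixes X oplus neg z
  assumes mv: "mv_algebra X oplus neg z"
begin

lemma mv_oplus_closed: "a \<in> X \<Longrightarrow> b \<in> X \<Longrightarrow> oplus a b \<in> X"
  and mv_neg_closed: "a \<in> X \<Longrightarrow> neg a \<in> X"
  and mv_zero_closed: "z \<in> X"
  and mv_oplus_assoc: "a \<in> X \<Longrightarrow> b \<in> X \<Longrightarrow> c \<in> X \<Longrightarrow> oplus (oplus a b) c = oplus a (oplus b c)"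
  and mv_oplus_commute: "a \<in> X \<Longrightarrow> b \<in> X \<Longrightarrow> oplus a b = oplus b a"
  and mv_oplus_zero: "a \<in> X \<Longrightarrow> oplus a z = a"
  and mv_oplus_one: "a \<in> X \<Longrightarrow> oplus a (neg z) = neg z"
  and mv_neg_neg: "a \<in> X \<Longrightarrow> neg (neg a) = a"
  and mv_lukasiewicz: "a \<in> X \<Longrightarrow> b \<in> X \<Longrightarrow>
      oplus (neg (oplus (neg a) b)) b = oplus (neg (oplus (neg b) a)) a"
  using mv unfolding mv_algebra_def by blast+

lemma mv_zero_oplus: "a \<in> X \<Longrightarrow> oplus z a = a"
  using mv_oplus_commute mv_oplus_zero mv_zero_closed by metis

lemma mv_neg_oplus_self: "a \<in> X \<Longrightarrow> oplus (neg a) a = neg z"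
  using mv_lukasiewicz[of a "neg z"]
  by (simp add: mv_neg_closed mv_zero_closed mv_oplus_one mv_neg_neg mv_zero_oplus)

lemma mv_le_imp_neg_oplus_eq_one:
  assumes "a \<in> X" "mv_le X oplus a b"
  shows "oplus (neg a) b = neg z"
proof -
  obtain c where "c \<in> X" "b = oplus a c" using assms(2) unfolding mv_le_def by blast
  then show ?thesis
    using assms(1) mv_oplus_assoc[of "neg a" a c]
    by (simp add: mv_neg_closed mv_neg_oplus_self mv_oplus_commute[of "neg z"] mv_oplus_one
        mv_zero_closed)
qed

lemma mv_le_antisym_on: "antisymp_on X (mv_le X oplus)"
proof (rule antisymp_onI)
  fix a b assume "a \<in> X" "b \<in> X" "mv_le X oplus a b" "mv_le X oplus b a"
  then show "a = b"
    using mv_lukasiewicz[of a b] mv_le_imp_neg_oplus_eq_one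
    by (simp add: mv_neg_neg mv_zero_closed mv_zero_oplus)
qed

lemma mv_le_trans_on: "transp_on X (mv_le X oplus)"
  unfolding mv_le_def by (rule transp_onI) (metis mv_oplus_assoc mv_oplus_closed)

lemma mv_le_refl_on: "reflp_on X (mv_le X oplus)"
  unfolding mv_le_def by (rule reflp_onI) (metis mv_oplus_zero mv_zero_closed)

lemma fib_seq_in_carrier:
  assumes "x \<in> X" "y \<in> X"
  shows "fib_seq oplus x y n \<in> X"
proof -
  have "fib_seq oplus x y n \<in> X \<and> fib_seq oplus x y (Suc n) \<in> X"
    by (induction n) (simp_all add: assms mv_oplus_closed)
  then show ?thesis ..
qed

lemma mv_le_fib_seq_Suc:
  assumes "x \<in> X" "y \<in> X"
  shows "mv_le X oplus (fib_seq oplus x y (Suc n)) (fib_seq oplus x y (Suc (Suc n)))"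
  unfolding mv_le_def
  using assms by (auto simp: fib_seq_in_carrier mv_oplus_commute)

end

theorem proposition2p6:
  fixes X :: "'a set" and oplus :: "'a \<Rightarrow> 'a \<Rightarrow> 'a" and neg :: "'a \<Rightarrow> 'a" and z :: 'a
  assumes "mv_algebra X oplus neg z" and "finite X"
    and "x \<in> X" and "y \<in> X"
  shows "\<exists>k::nat. \<forall>n\<ge>k. fib_seq oplus x y n = fib_seq oplus x y k"
proof -
  define v where "v n = fib_seq oplus x y (Suc n)" for n
  have range_v: "range v \<subseteq> X"
    using fib_seq_in_carrier[OF assms(1,3,4)] by (auto simp: v_def)
  have "\<exists>k. \<forall>n\<ge>k. v n = v k"
  proof (rule chain_finite_range_eventually_const[where R = "mv_le X oplus"])
    show "reflp_on (range v) (mv_le X oplus)"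
      using reflp_on_subset[OF mv_le_refl_on[OF assms(1)] range_v] .
    show "transp_on (range v) (mv_le X oplus)"
      using transp_on_subset[OF mv_le_trans_on[OF assms(1)] range_v] .
    show "antisymp_on (range v) (mv_le X oplus)"
      using antisymp_on_subset[OF mv_le_antisym_on[OF assms(1)] range_v] .
    show "mv_le X oplus (v n) (v (Suc n))" for n
      unfolding v_def using mv_le_fib_seq_Suc[OF assms(1,3,4)] .
    show "finite (range v)" using finite_subset[OF range_v assms(2)] .
  qed
  then obtain k where k: "\<forall>n\<ge>k. v n = v k" ..
  have "fib_seq oplus x y n = fib_seq oplus x y (Suc k)" if "n \<ge> Suc k" for n
  proof -
    obtain m where "n = Suc m" "m \<ge> k" using \<open>n \<ge> Suc k\<close> by (cases n) auto
    then show ?thesis using k[rule_format, of m] unfolding v_def by simp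
  qed
  then show ?thesis by blast
qed

end
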